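(* Assume $p\ge2$ and $\hat\pi_k(x)>0$ for all $x\in\mathcal X_0$ and $k\in[1,p]$. Consider the following iteration for $T\ge1$: $\lambda_0(k)=1/p$, $g_0(x,k)=1/p$; for $t=0,\dots,T-1$: set $\ell_t(k)=D_{KL}(\hat{\mathsf p}_k\|\pi_{g_t})$; set $\lambda_{t+1}(k)=\lambda_t(k)e^{\eta_\lambda\ell_t(k)}/\sum_j\lambda_t(j)e^{\eta_\lambda\ell_t(j)}$; set $v_t(x,k)=-\frac{\hat{\mathsf p}_{\lambda_{t+1}}(x)}{\pi_{g_t}(x)}\hat\pi_k(x)$ for all $(x,k)\in\mathcal X_0\times[1,p]$; set $g_{t+1}=\Pi_{\mathcal G_1}(g_t-\eta_gv_t)$, where $\Pi_{\mathcal G_1}$ is the Euclidean projection onto $\mathcal G_1\subset\mathbb R^{\mathcal X_0\times[1,p]}$. Let $\bar g_T=\frac1T\sum_{t=1}^Tg_t$ and $\tilde V=\min_{g\in\mathcal G_1}\max_{\lambda\in\Delta}\tilde L(\lambda,g)$. Then there are constants $a,b,C>0$ depending only on $\mathcal G_1$, $\sup_{g\in\mathcal G_1,k}D_{KL}(\hat{\mathsf p}_k\|\pi_g)$ and $\sup_{g\in\mathcal G_1,\lambda\in\Delta}\|\nabla_g\tilde L(\lambda,g)\|_2$ (all finite under the positivity assumption) such that, with step sizes $\eta_\lambda=a/\sqrt T$ and $\eta_g=b/\sqrt T$, $$\max_{\lambda\in\Delta}\tilde L(\lambda,\bar g_T)-\tilde V\le C\sqrt{\frac{\log p}{T}} 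.$$
   Context: Fix an integer $p\ge 1$, $[1,p]=\{1,\dots,p\}$, $\Delta=\{\lambda\in\mathbb R^p:\lambda_k\ge 0,\ \sum_k\lambda_k=1\}$. Let $\hat{\mathsf p}_1,\dots,\hat{\mathsf p}_p$ be probability distributions with finite supports, $\mathcal X_0=\bigcup_k\mathrm{supp}(\hat{\mathsf p}_k)$, and $\hat\pi_1,\dots,\hat\pi_p$ probability distributions on $\mathcal X_0$. A gate is $g:\mathcal X_0\times[1,p]\to[0,1]$ with $\sum_kg(x,k)=1$ for each $x$; $\pi_g(x)=\sum_kg(x,k)\hat\pi_k(x)$, $Z_g=\sum_{x\in\mathcal X_0}\pi_g(x)$, $\mathcal G_1=\{g:Z_g=1\}$ (a compact convex subset of $\mathbb R^{\mathcal X_0\times[1,p]}$). For $\lambda\in\Delta$, $\hat{\mathsf p}_\lambda=\sum_k\lambda_k\hat{\mathsf p}_k$. $D_{KL}(P\|Q)=\sum_xP(x)\log\frac{P(x)}{Q(x)}$. The linearized payoff is $\tilde L(\lambda,g)=\sum_{k=1}^p\lambda_kD_{KL}(\hat{\mathsf p}_k\|\pi_g)$. *)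

theory Defs
  imports "HOL-Analysis.Analysis" "HOL-Probability.Probability_Mass_Function"
begin

definition X0 :: "nat \<Rightarrow> (nat \<Rightarrow> 'a pmf) \<Rightarrow> 'a set" where
  "X0 p ph = (\<Union>k\<in>{1..p}. set_pmf (ph k))"

text \<open>Gates are represented as functions 'a => nat => real, extensional
 (zero outside X_0 x [1,p]); this realizes R^(X_0 x [1,p]).\<close>

definition pi_g :: "nat \<Rightarrow> (nat \<Rightarrow> 'a pmf) \<Rightarrow> ('a \<Rightarrow> nat \<Rightarrow> real) \<Rightarrow> 'a \<Rightarrow> real" where
  "pi_g p pih g x = (\<Sum>k=1..p. g x k * pmf (pih k) x)"

definition Z_g :: "nat \<Rightarrow> (nat \<Rightarrow> 'a pmf) \<Rightarrow> (nat \<Rightarrow> 'a pmf) \<Rightarrow> ('a \<Rightarrow> nat \<Rightarrow> real) \<Rightarrow> real" where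
  "Z_g p ph pih g = (\<Sum>x\<in>X0 p ph. pi_g p pih g x)"

definition is_gate :: "nat \<Rightarrow> 'a set \<Rightarrow> ('a \<Rightarrow> nat \<Rightarrow> real) \<Rightarrow> bool" where
  "is_gate p X g \<longleftrightarrow>
     (\<forall>x\<in>X. \<forall>k\<in>{1..p}. 0 \<le> g x k \<and> g x k \<le> 1) \<and>
     (\<forall>x\<in>X. (\<Sum>k=1..p. g x k) = 1) \<and>
     (\<forall>x k. x \<notin> X \<or> k \<notin> {1..p} \<longrightarrow> g x k = 0)"

definition G1 :: "nat \<Rightarrow> (nat \<Rightarrow> 'a pmf) \<Rightarrow> (nat \<Rightarrow> 'a pmf) \<Rightarrow> ('a \<Rightarrow> nat \<Rightarrow> real) set" where
  "G1 p ph pih = {g. is_gate p (X0 p ph) g \<and> Z_g p ph pih g = 1}"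

definition prob_simplex :: "nat \<Rightarrow> (nat \<Rightarrow> real) set" where
  "prob_simplex p = {l. (\<forall>k\<in>{1..p}. 0 \<le> l k) \<and> (\<Sum>k=1..p. l k) = 1 \<and> (\<forall>k. k \<notin> {1..p} \<longrightarrow> l k = 0)}"

definition D_KL :: "'a pmf \<Rightarrow> ('a \<Rightarrow> real) \<Rightarrow> real" where
  "D_KL P Q = (\<Sum>x\<in>set_pmf P. pmf P x * ln (pmf P x / Q x))"

definition Ltil :: "nat \<Rightarrow> (nat \<Rightarrow> 'a pmf) \<Rightarrow> (nat \<Rightarrow> 'a pmf) \<Rightarrow> (nat \<Rightarrow> real) \<Rightarrow> ('a \<Rightarrow> nat \<Rightarrow> real) \<Rightarrow> real" where
  "Ltil p ph pih l g = (\<Sum>k=1..p. l k * D_KL (ph k) (pi_g p pih g))"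

definition p_mix :: "nat \<Rightarrow> (nat \<Rightarrow> 'a pmf) \<Rightarrow> (nat \<Rightarrow> real) \<Rightarrow> 'a \<Rightarrow> real" where
  "p_mix p ph l x = (\<Sum>k=1..p. l k * pmf (ph k) x)"

text \<open>Gradient of Ltil in g: d/dg(x,k) Ltil(l,g) = - ph_l(x) / pi_g(x) * pih_k(x)
 on X_0 x [1,p] (extended by zero).\<close>
definition grad_g :: "nat \<Rightarrow> (nat \<Rightarrow> 'a pmf) \<Rightarrow> (nat \<Rightarrow> 'a pmf) \<Rightarrow> (nat \<Rightarrow> real) \<Rightarrow> ('a \<Rightarrow> nat \<Rightarrow> real) \<Rightarrow> 'a \<Rightarrow> nat \<Rightarrow> real" where
  "grad_g p ph pih l g x k =
     (if x \<in> X0 p ph \<and> k \<in> {1..p} then - (p_mix p ph l x / pi_g p pih g x) * pmf (pih k) x else 0)"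

definition sqdist :: "nat \<Rightarrow> 'a set \<Rightarrow> ('a \<Rightarrow> nat \<Rightarrow> real) \<Rightarrow> ('a \<Rightarrow> nat \<Rightarrow> real) \<Rightarrow> real" where
  "sqdist p X u w = (\<Sum>x\<in>X. \<Sum>k=1..p. (u x k - w x k)^2)"

definition enorm :: "nat \<Rightarrow> 'a set \<Rightarrow> ('a \<Rightarrow> nat \<Rightarrow> real) \<Rightarrow> real" where
  "enorm p X u = sqrt (\<Sum>x\<in>X. \<Sum>k=1..p. (u x k)^2)"

definition proj :: "nat \<Rightarrow> 'a set \<Rightarrow> ('a \<Rightarrow> nat \<Rightarrow> real) set \<Rightarrow> ('a \<Rightarrow> nat \<Rightarrow> real) \<Rightarrow> ('a \<Rightarrow> nat \<Rightarrow> real)" where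
  "proj p X S y = (THE z. z \<in> S \<and> (\<forall>w\<in>S. sqdist p X y z \<le> sqdist p X y w))"

fun iter :: "nat \<Rightarrow> (nat \<Rightarrow> 'a pmf) \<Rightarrow> (nat \<Rightarrow> 'a pmf) \<Rightarrow> real \<Rightarrow> real \<Rightarrow> nat \<Rightarrow> (nat \<Rightarrow> real) \<times> ('a \<Rightarrow> nat \<Rightarrow> real)" where
  "iter p ph pih eta_l eta_g 0 =
     ((\<lambda>k. if k \<in> {1..p} then 1 / real p else 0),
      (\<lambda>x k. if x \<in> X0 p ph \<and> k \<in> {1..p} then 1 / real p else 0))"
| "iter p ph pih eta_l eta_g (Suc t) =
     (let lt = fst (iter p ph pih eta_l eta_g t);
          gt = snd (iter p ph pih eta_l eta_g t);
          loss = (\<lambda>k. D_KL (ph k) (pi_g p pih gt));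
          l' = (\<lambda>k. if k \<in> {1..p}
                     then lt k * exp (eta_l * loss k) / (\<Sum>j=1..p. lt j * exp (eta_l * loss j))
                     else 0);
          v = (\<lambda>x k. if x \<in> X0 p ph \<and> k \<in> {1..p}
                     then - (p_mix p ph l' x / pi_g p pih gt x) * pmf (pih k) x else 0);
          g' = proj p (X0 p ph) (G1 p ph pih) (\<lambda>x k. gt x k - eta_g * v x k)
      in (l', g'))"

definition gbar :: "nat \<Rightarrow> (nat \<Rightarrow> 'a pmf) \<Rightarrow> (nat \<Rightarrow> 'a pmf) \<Rightarrow> real \<Rightarrow> real \<Rightarrow> nat \<Rightarrow> 'a \<Rightarrow> nat \<Rightarrow> real" where
  "gbar p ph pih eta_l eta_g T = (\<lambda>x k. (1 / real T) * (\<Sum>t=1..T. snd (iter p ph pih eta_l eta_g t) x k))"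

definition Vtil :: "nat \<Rightarrow> (nat \<Rightarrow> 'a pmf) \<Rightarrow> (nat \<Rightarrow> 'a pmf) \<Rightarrow> real" where
  "Vtil p ph pih = (INF g\<in>G1 p ph pih. SUP l\<in>prob_simplex p. Ltil p ph pih l g)"

definition supKL :: "nat \<Rightarrow> (nat \<Rightarrow> 'a pmf) \<Rightarrow> (nat \<Rightarrow> 'a pmf) \<Rightarrow> real" where
  "supKL p ph pih = (SUP gk\<in>G1 p ph pih \<times> {1..p}. D_KL (ph (snd gk)) (pi_g p pih (fst gk)))"

definition supGrad :: "nat \<Rightarrow> (nat \<Rightarrow> 'a pmf) \<Rightarrow> (nat \<Rightarrow> 'a pmf) \<Rightarrow> real" where
  "supGrad p ph pih = (SUP gl\<in>G1 p ph pih \<times> prob_simplex p.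
      enorm p (X0 p ph) (grad_g p ph pih (snd gl) (fst gl)))"

end

(* The iteration is a no-regret dynamics for the game Ltil, which is linear in lambda and convex
   in g (pi_g is linear in g, and -ln is convex). The lambda-player runs exponential weights, whose
   regret against any fixed lambda is at most ln p / eta_lambda; the g-player runs projected
   gradient descent on the compact convex set G1, whose regret is at most
   diam(G1)^2 / (2 eta_g) + T eta_g G^2 / 2 for a gradient bound G. Adding the two regret bounds
   and using convexity of Ltil in g at the average gbar_T shows that max_lambda Ltil(lambda, gbar_T)
   exceeds min_g max_lambda Ltil by O(1 / sqrt T) when both step sizes are 1 / sqrt T.
   Positivity of pih keeps pi_g away from 0 on X_0, which makes the losses and gradients bounded. *)

theory Submission
  imports Defs
begin

lemma ln_le_tangent:
  fixes x y :: real
  assumes "0 < x" "0 < y"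
  shows "ln y \<le> ln x + (y - x) / x"
proof -
  have "ln (y / x) \<le> y / x - 1" using assms by (intro ln_le_minus_one) simp
  then show ?thesis using assms by (simp add: ln_div diff_divide_distrib)
qed

lemma diff_le_mult_ln_div:
  fixes a c :: real
  assumes "0 \<le> a" "0 < c"
  shows "a - c \<le> a * ln (a / c)"
proof (cases "a = 0")
  case False
  with assms have "0 < a" by simp
  with assms have "ln c \<le> ln a + (c - a) / a" by (intro ln_le_tangent)
  then have "a * (ln c - ln a) \<le> c - a" using \<open>0 < a\<close> by (simp add: field_simps)
  then show ?thesis using \<open>0 < a\<close> assms by (simp add: ln_div algebra_simps)
qed (use assms in simp)

lemma mult_ln_div_diff_ge:
  fixes a b c :: real
  assumes "0 \<le> a" "0 < b" "0 < c"
  shows "a * (b - c) / b \<le> a * ln (a / c) - a * ln (a / b)"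
proof (cases "a = 0")
  case False
  with assms have "0 < a" by simp
  have "ln c \<le> ln b + (c - b) / b" using assms by (intro ln_le_tangent)
  moreover have "(b - c) / b = - ((c - b) / b)" by (simp add: minus_divide_left)
  ultimately have "a * ((b - c) / b) \<le> a * (ln b - ln c)"
    using \<open>0 < a\<close> by (intro mult_left_mono) auto
  then show ?thesis using \<open>0 < a\<close> assms by (simp add: ln_div algebra_simps)
qed simp

lemma gibbs_inequality:
  fixes a c :: "'i \<Rightarrow> real"
  assumes "\<And>i. i \<in> A \<Longrightarrow> 0 \<le> a i" "\<And>i. i \<in> A \<Longrightarrow> 0 < c i"
  shows "(\<Sum>i\<in>A. a i) - (\<Sum>i\<in>A. c i) \<le> (\<Sum>i\<in>A. a i * ln (a i / c i))"
  unfolding sum_subtractf[symmetric] using assms by (intro sum_mono diff_le_mult_ln_div)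

locale exponential_weights =
  fixes K :: "'k set" and eta :: real and w loss :: "nat \<Rightarrow> 'k \<Rightarrow> real"
  assumes finite_K: "finite K" and K_nonempty: "K \<noteq> {}"
    and w_0: "k \<in> K \<Longrightarrow> w 0 k = 1 / real (card K)"
    and w_Suc: "k \<in> K \<Longrightarrow> w (Suc t) k =
      w t k * exp (eta * loss t k) / (\<Sum>j\<in>K. w t j * exp (eta * loss t j))"
begin

definition normalizer :: "nat \<Rightarrow> real" where
  "normalizer t = (\<Sum>j\<in>K. w t j * exp (eta * loss t j))"

lemma w_pos_sum_eq_1: "(\<forall>k\<in>K. 0 < w t k) \<and> (\<Sum>k\<in>K. w t k) = 1"
proof (induction t)
  case 0
  have "card K > 0" using finite_K K_nonempty by (simp add: card_gt_0_iff)
  then show ?case using w_0 by simp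
next
  case (Suc t)
  then have "0 < normalizer t"
    unfolding normalizer_def using finite_K K_nonempty by (intro sum_pos) auto
  then show ?case
    using Suc w_Suc by (simp add: normalizer_def[symmetric] sum_divide_distrib[symmetric])
qed

lemma w_pos: "k \<in> K \<Longrightarrow> 0 < w t k"
  using w_pos_sum_eq_1 by blast

lemma sum_w: "(\<Sum>k\<in>K. w t k) = 1"
  using w_pos_sum_eq_1 by blast

lemma normalizer_pos: "0 < normalizer t"
  unfolding normalizer_def using finite_K K_nonempty w_pos by (intro sum_pos) auto

lemma ln_w_Suc:
  assumes "k \<in> K"
  shows "ln (w (Suc t) k) = ln (w t k) + eta * loss t k - ln (normalizer t)"
proof -
  have "w (Suc t) k = w t k * exp (eta * loss t k) / normalizer t"
    using w_Suc[OF assms] by (simp add: normalizer_def)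
  with w_pos[OF assms, of t] normalizer_pos[of t] show ?thesis
    by (simp add: ln_div ln_mult)
qed

(* ln (normalizer t) = eta <w (Suc t), loss t> - KL (w (Suc t) || w t), and KL is nonnegative. *)
lemma ln_normalizer_le: "ln (normalizer t) \<le> eta * (\<Sum>k\<in>K. w (Suc t) k * loss t k)"
proof -
  have "0 = (\<Sum>k\<in>K. w (Suc t) k) - (\<Sum>k\<in>K. w t k)"
    using sum_w by simp
  also have "\<dots> \<le> (\<Sum>k\<in>K. w (Suc t) k * ln (w (Suc t) k / w t k))"
    using w_pos by (intro gibbs_inequality less_imp_le)
  also have "\<dots> = (\<Sum>k\<in>K. w (Suc t) k * (eta * loss t k - ln (normalizer t)))"
    using w_pos by (intro sum.cong refl) (simp add: ln_div ln_w_Suc w_pos[THEN less_imp_not_eq2])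
  also have "\<dots> = eta * (\<Sum>k\<in>K. w (Suc t) k * loss t k) - ln (normalizer t)"
    using sum_w by (simp add: algebra_simps sum_subtractf sum_distrib_left sum_distrib_right[symmetric])
  finally show ?thesis by simp
qed

(* The loss of round t is charged to w (Suc t), which has already seen it: this is why the bound
   has no eta^2 term. *)
theorem regret_bound:
  assumes "\<And>k. k \<in> K \<Longrightarrow> 0 \<le> u k" "(\<Sum>k\<in>K. u k) = 1"
  shows "eta * (\<Sum>t<T. \<Sum>k\<in>K. u k * loss t k)
    \<le> ln (real (card K)) + eta * (\<Sum>t<T. \<Sum>k\<in>K. w (Suc t) k * loss t k)"
proof -
  have "(\<Sum>t<T. ln (normalizer t)) = (\<Sum>t<T. \<Sum>k\<in>K. u k * ln (normalizer t))"
    using assms(2) by (simp add: sum_distrib_right[symmetric])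
  then have "eta * (\<Sum>t<T. \<Sum>k\<in>K. u k * loss t k) - (\<Sum>t<T. ln (normalizer t))
      = (\<Sum>k\<in>K. \<Sum>t<T. u k * (eta * loss t k) - u k * ln (normalizer t))"
    by (simp add: sum_subtractf sum.swap[of _ K] sum_distrib_left algebra_simps)
  also have "\<dots> = (\<Sum>k\<in>K. u k * (ln (w T k) - ln (w 0 k)))"
  proof (intro sum.cong refl)
    fix k assume k: "k \<in> K"
    have "ln (w T k) - ln (w 0 k) = (\<Sum>t<T. eta * loss t k - ln (normalizer t))"
      using sum_lessThan_telescope[of "\<lambda>t. ln (w t k)" T] by (simp add: ln_w_Suc[OF k])
    then show "(\<Sum>t<T. u k * (eta * loss t k) - u k * ln (normalizer t))
        = u k * (ln (w T k) - ln (w 0 k))"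
      by (simp add: sum_distrib_left right_diff_distrib)
  qed
  also have "\<dots> \<le> (\<Sum>k\<in>K. u k * ln (real (card K)))"
  proof (intro sum_mono mult_left_mono)
    fix k assume k: "k \<in> K"
    have "w T k \<le> 1"
      using member_le_sum[of k K "w T"] finite_K k w_pos sum_w by (simp add: less_imp_le)
    then show "ln (w T k) - ln (w 0 k) \<le> ln (real (card K))"
      using k w_pos w_0 by (simp add: ln_div)
  qed (use assms in auto)
  also have "\<dots> = ln (real (card K))"
    using assms(2) by (simp add: sum_distrib_right[symmetric])
  finally have "eta * (\<Sum>t<T. \<Sum>k\<in>K. u k * loss t k) - (\<Sum>t<T. ln (normalizer t))
      \<le> ln (real (card K))" .
  moreover have "(\<Sum>t<T. ln (normalizer t)) \<le> eta * (\<Sum>t<T. \<Sum>k\<in>K. w (Suc t) k * loss t k)"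
    using sum_mono[OF ln_normalizer_le, where K = "{..<T}"] by (simp add: sum_distrib_left)
  ultimately show ?thesis by linarith
qed

end

definition inner_on ::
    "nat \<Rightarrow> 'a set \<Rightarrow> ('a \<Rightarrow> nat \<Rightarrow> real) \<Rightarrow> ('a \<Rightarrow> nat \<Rightarrow> real) \<Rightarrow> real" where
  "inner_on p X u w = (\<Sum>x\<in>X. \<Sum>k=1..p. u x k * w x k)"

lemma sqdist_nonneg: "0 \<le> sqdist p X u w"
  unfolding sqdist_def by (intro sum_nonneg) auto

lemma sqdist_commute: "sqdist p X u w = sqdist p X w u"
  unfolding sqdist_def by (simp add: power2_commute)

lemma enorm_nonneg: "0 \<le> enorm p X v"
  unfolding enorm_def by (simp add: sum_nonneg)

lemma inner_on_self: "inner_on p X v v = (enorm p X v)\<^sup>2"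
  unfolding inner_on_def enorm_def by (simp add: power2_eq_square[symmetric] sum_nonneg)

lemma inner_on_diff_swap:
  "inner_on p X v (\<lambda>x k. a x k - b x k) = - inner_on p X v (\<lambda>x k. b x k - a x k)"
  unfolding inner_on_def by (simp add: sum_negf[symmetric] algebra_simps)

lemma inner_on_sum_right:
  "(\<Sum>i\<in>I. inner_on p X v (f i)) = inner_on p X v (\<lambda>x k. \<Sum>i\<in>I. f i x k)"
  unfolding inner_on_def sum_distrib_left by (subst sum.swap, subst (2) sum.swap) simp

lemma sqdist_gradient_step:
  "sqdist p X (\<lambda>x k. a x k - e * v x k) b
    = sqdist p X a b - 2 * e * inner_on p X v (\<lambda>x k. a x k - b x k) + e\<^sup>2 * inner_on p X v v"
proof -
  have "sqdist p X (\<lambda>x k. a x k - e * v x k) b = (\<Sum>x\<in>X. \<Sum>k=1..p.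
      (a x k - b x k)\<^sup>2 - 2 * e * (v x k * (a x k - b x k)) + e\<^sup>2 * (v x k * v x k))"
    unfolding sqdist_def by (intro sum.cong refl) (simp add: power2_eq_square algebra_simps)
  then show ?thesis
    unfolding sqdist_def inner_on_def by (simp add: sum.distrib sum_subtractf sum_distrib_left)
qed

lemma sqdist_segment:
  "sqdist p X y (\<lambda>x k. (1 - s) * z x k + s * g x k)
    = sqdist p X y z - 2 * s * inner_on p X (\<lambda>x k. y x k - z x k) (\<lambda>x k. g x k - z x k)
      + s\<^sup>2 * sqdist p X g z"
proof -
  have "sqdist p X y (\<lambda>x k. (1 - s) * z x k + s * g x k) = (\<Sum>x\<in>X. \<Sum>k=1..p.
      (y x k - z x k)\<^sup>2 - 2 * s * ((y x k - z x k) * (g x k - z x k)) + s\<^sup>2 * (g x k - z x k)\<^sup>2)"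
    unfolding sqdist_def by (intro sum.cong refl) (simp add: power2_eq_square algebra_simps)
  then show ?thesis
    unfolding sqdist_def inner_on_def by (simp add: sum.distrib sum_subtractf sum_distrib_left)
qed

lemma sqdist_le_0_imp_eq:
  assumes "finite X" "sqdist p X u w \<le> 0" "x \<in> X" "k \<in> {1..p}"
  shows "u x k = w x k"
proof -
  have "(\<Sum>x\<in>X. \<Sum>k=1..p. (u x k - w x k)\<^sup>2) = 0"
    using assms(2) sqdist_nonneg[of p X u w] unfolding sqdist_def by linarith
  then have "(u x k - w x k)\<^sup>2 = 0"
    using assms by (simp add: sum_nonneg_eq_0_iff sum_nonneg)
  then show ?thesis by simp
qed

lemma continuous_on_apply2: "continuous_on S (\<lambda>g :: 'a \<Rightarrow> 'b \<Rightarrow> 'c::topological_space. g x k)"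
  using continuous_on_product_then_coordinatewise[OF continuous_on_product_then_coordinatewise[OF
      continuous_on_id]] .

lemma compact_unit_box: "compact {g :: 'a \<Rightarrow> 'b \<Rightarrow> real. \<forall>x k. g x k \<in> {0..1}}"
proof -
  have "compact (PiE UNIV (\<lambda>_::'a. PiE UNIV (\<lambda>_::'b. {0..1::real})))"
    using compactin_PiE[of "\<lambda>_. euclidean" UNIV "\<lambda>_. PiE UNIV (\<lambda>_::'b. {0..1::real})"]
      compactin_PiE[of "\<lambda>_. euclidean" UNIV "\<lambda>_::'b. {0..1::real}"]
    by (simp add: euclidean_product_topology)
  moreover have "PiE UNIV (\<lambda>_::'a. PiE UNIV (\<lambda>_::'b. {0..1::real}))
      = {g. \<forall>x k. g x k \<in> {0..1}}"
    by (auto simp: PiE_def Pi_def)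
  ultimately show ?thesis by simp
qed

locale projection_domain =
  fixes p :: nat and X :: "'a set" and S :: "('a \<Rightarrow> nat \<Rightarrow> real) set"
  assumes finite_X: "finite X" and S_nonempty: "S \<noteq> {}" and compact_S: "compact S"
    and convex_S: "g \<in> S \<Longrightarrow> h \<in> S \<Longrightarrow> 0 \<le> s \<Longrightarrow> s \<le> 1
      \<Longrightarrow> (\<lambda>x k. (1 - s) * g x k + s * h x k) \<in> S"
    and S_extensional: "g \<in> S \<Longrightarrow> x \<notin> X \<or> k \<notin> {1..p} \<Longrightarrow> g x k = 0"
begin

lemma minimizer_pythagoras:
  assumes z: "z \<in> S" "\<And>w. w \<in> S \<Longrightarrow> sqdist p X y z \<le> sqdist p X y w" and g: "g \<in> S"
  shows "sqdist p X y z + sqdist p X g z \<le> sqdist p X y g"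
proof -
  define c where "c = inner_on p X (\<lambda>x k. y x k - z x k) (\<lambda>x k. g x k - z x k)"
  define D where "D = sqdist p X g z"
  have segment:
    "sqdist p X y (\<lambda>x k. (1 - s) * z x k + s * g x k) = sqdist p X y z - 2 * s * c + s\<^sup>2 * D"
    for s unfolding c_def D_def by (rule sqdist_segment)
  have small: "c \<le> s * D / 2" if "0 < s" "s \<le> 1" for s
  proof -
    have "sqdist p X y z \<le> sqdist p X y z - 2 * s * c + s\<^sup>2 * D"
      using z(2)[OF convex_S[OF z(1) g]] that segment by simp
    then have "s * (2 * c) \<le> s * (s * D)" by (simp add: power2_eq_square algebra_simps)
    then show ?thesis using that by simp
  qed
  have "c \<le> 0"
  proof (rule ccontr)
    assume "\<not> c \<le> 0"
    define s where "s = min 1 (c / (D + 1))"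
    have "0 \<le> D" unfolding D_def by (rule sqdist_nonneg)
    have "s * D \<le> c / (D + 1) * D"
      using \<open>0 \<le> D\<close> by (intro mult_right_mono) (auto simp: s_def)
    also have "\<dots> < c" using \<open>\<not> c \<le> 0\<close> \<open>0 \<le> D\<close> by (simp add: field_simps)
    finally show False
      using small[of s] \<open>\<not> c \<le> 0\<close> \<open>0 \<le> D\<close> by (simp add: s_def)
  qed
  then show ?thesis using segment[of 1] by (simp add: D_def)
qed

lemma minimizer_unique:
  assumes "z \<in> S" "\<And>w. w \<in> S \<Longrightarrow> sqdist p X y z \<le> sqdist p X y w"
    and "z' \<in> S" "\<And>w. w \<in> S \<Longrightarrow> sqdist p X y z' \<le> sqdist p X y w"
  shows "z' = z"
proof (rule ext, rule ext)
  fix x k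
  have "sqdist p X z' z \<le> 0"
    using minimizer_pythagoras[OF assms(1,2,3)] assms(4)[OF assms(1)] by simp
  then show "z' x k = z x k"
    using sqdist_le_0_imp_eq[OF finite_X] S_extensional[OF assms(1)] S_extensional[OF assms(3)]
    by (cases "x \<in> X \<and> k \<in> {1..p}") auto
qed

lemma proj_minimizes:
  "proj p X S y \<in> S \<and> (\<forall>w\<in>S. sqdist p X y (proj p X S y) \<le> sqdist p X y w)"
proof -
  have "continuous_on S (sqdist p X y)"
    unfolding sqdist_def
    by (intro continuous_on_sum continuous_on_power continuous_on_diff continuous_on_const
        continuous_on_apply2)
  then obtain z where "z \<in> S" "\<forall>w\<in>S. sqdist p X y z \<le> sqdist p X y w"
    using continuous_attains_inf[OF compact_S S_nonempty] by blast
  then have "\<exists>!z. z \<in> S \<and> (\<forall>w\<in>S. sqdist p X y z \<le> sqdist p X y w)"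
    using minimizer_unique by blast
  then show ?thesis unfolding proj_def by (rule theI')
qed

lemma proj_in: "proj p X S y \<in> S"
  using proj_minimizes by blast

lemma sqdist_proj_le: "g \<in> S \<Longrightarrow> sqdist p X (proj p X S y) g \<le> sqdist p X y g"
  using minimizer_pythagoras[of "proj p X S y" y g] proj_minimizes sqdist_nonneg[of p X y "proj p X S y"]
  by (simp add: sqdist_commute[of p X g])

theorem projected_gradient_regret:
  assumes step: "\<And>t. g (Suc t) = proj p X S (\<lambda>x k. g t x k - eps * v t x k)"
    and eps: "0 < eps" and h: "h \<in> S" and bound: "\<And>t. enorm p X (v t) \<le> G"
  shows "(\<Sum>t<T. inner_on p X (v t) (\<lambda>x k. g t x k - h x k))
    \<le> sqdist p X (g 0) h / (2 * eps) + real T * eps * G\<^sup>2 / 2"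
proof -
  define D where "D t = sqdist p X (g t) h" for t
  define c where "c t = inner_on p X (v t) (\<lambda>x k. g t x k - h x k)" for t
  have descent: "2 * eps * c t \<le> D t - D (Suc t) + eps\<^sup>2 * G\<^sup>2" for t
  proof -
    have "D (Suc t) \<le> sqdist p X (\<lambda>x k. g t x k - eps * v t x k) h"
      unfolding D_def step using sqdist_proj_le[OF h] .
    also have "\<dots> = D t - 2 * eps * c t + eps\<^sup>2 * (enorm p X (v t))\<^sup>2"
      unfolding D_def c_def sqdist_gradient_step inner_on_self ..
    also have "\<dots> \<le> D t - 2 * eps * c t + eps\<^sup>2 * G\<^sup>2"
      using bound[of t] enorm_nonneg[of p X "v t"] by (simp add: mult_left_mono power_mono)
    finally show ?thesis by simp
  qed
  have "2 * eps * (\<Sum>t<T. c t) \<le> (\<Sum>t<T. D t - D (Suc t) + eps\<^sup>2 * G\<^sup>2)"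
    unfolding sum_distrib_left by (intro sum_mono descent)
  also have "\<dots> = D 0 - D T + real T * eps\<^sup>2 * G\<^sup>2"
    by (simp add: sum.distrib sum_lessThan_telescope')
  also have "\<dots> \<le> D 0 + real T * eps\<^sup>2 * G\<^sup>2"
    using sqdist_nonneg by (simp add: D_def)
  finally show ?thesis
    using eps by (simp add: c_def D_def field_simps power2_eq_square)
qed

end

lemma simplex_weighted_sum_le:
  assumes "l \<in> prob_simplex p" "\<And>k. k \<in> {1..p} \<Longrightarrow> f k \<le> c"
  shows "(\<Sum>k=1..p. l k * f k) \<le> c"
proof -
  have "(\<Sum>k=1..p. l k * f k) \<le> (\<Sum>k=1..p. l k * c)"
    using assms by (intro sum_mono mult_left_mono) (auto simp: prob_simplex_def)
  also have "\<dots> = c" using assms(1) by (simp add: prob_simplex_def sum_distrib_right[symmetric])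
  finally show ?thesis .
qed

lemma simplex_nonempty: "0 < p \<Longrightarrow> prob_simplex p \<noteq> {}"
proof -
  assume "0 < p"
  then have "(\<lambda>k. if k \<in> {1..p} then 1 / real p else 0) \<in> prob_simplex p"
    by (simp add: prob_simplex_def)
  then show ?thesis by blast
qed

(* The constants may depend only on G1, so p and X_0 are read off from G1 itself. *)
definition expert_indices :: "('a \<Rightarrow> nat \<Rightarrow> real) set \<Rightarrow> nat set" where
  "expert_indices S = {k. \<exists>g\<in>S. \<exists>x. g x k \<noteq> 0}"

definition gate_domain :: "('a \<Rightarrow> nat \<Rightarrow> real) set \<Rightarrow> 'a set" where
  "gate_domain S = {x. \<exists>g\<in>S. \<exists>k. g x k \<noteq> 0}"

definition rate_constant :: "('a \<Rightarrow> nat \<Rightarrow> real) set \<Rightarrow> real \<Rightarrow> real \<Rightarrow> real" where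
  "rate_constant S kl_bound grad_bound =
    (let n = real (card (expert_indices S)); d = real (card (gate_domain S))
     in (ln n + d * n / 2 + grad_bound\<^sup>2 / 2 + kl_bound) / sqrt (ln n))"

locale gate_problem =
  fixes p :: nat and ph pih :: "nat \<Rightarrow> 'a pmf"
  assumes two_le_p: "2 \<le> p"
    and finite_support: "k \<in> {1..p} \<Longrightarrow> finite (set_pmf (ph k))"
    and pih_support: "k \<in> {1..p} \<Longrightarrow> set_pmf (pih k) \<subseteq> X0 p ph"
    and pih_pos: "k \<in> {1..p} \<Longrightarrow> x \<in> X0 p ph \<Longrightarrow> 0 < pmf (pih k) x"
begin

abbreviation "X \<equiv> X0 p ph"
abbreviation "gates \<equiv> G1 p ph pih"

lemma finite_X: "finite X"
  using finite_support by (simp add: X0_def)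

lemma ph_support: "k \<in> {1..p} \<Longrightarrow> set_pmf (ph k) \<subseteq> X"
  by (auto simp: X0_def)

lemma X_nonempty: "X \<noteq> {}"
  using ph_support[of 1] set_pmf_not_empty[of "ph 1"] two_le_p by auto

lemma sum_pmf_ph: "k \<in> {1..p} \<Longrightarrow> (\<Sum>x\<in>X. pmf (ph k) x) = 1"
  using sum_pmf_eq_1[OF finite_X ph_support] by simp

lemma sum_pmf_pih: "k \<in> {1..p} \<Longrightarrow> (\<Sum>x\<in>X. pmf (pih k) x) = 1"
  using sum_pmf_eq_1[OF finite_X pih_support] by simp

lemma D_KL_eq_sum_X:
  "k \<in> {1..p} \<Longrightarrow> D_KL (ph k) q = (\<Sum>x\<in>X. pmf (ph k) x * ln (pmf (ph k) x / q x))"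
  unfolding D_KL_def
  by (intro sum.mono_neutral_left finite_X ph_support) (auto simp: set_pmf_iff)

definition pih_min :: real where
  "pih_min = Min ((\<lambda>(x, k). pmf (pih k) x) ` (X \<times> {1..p}))"

lemma pih_min_pos: "0 < pih_min"
proof -
  have "X \<times> {1..p} \<noteq> {}" using X_nonempty two_le_p by auto
  then show ?thesis
    unfolding pih_min_def using finite_X pih_pos by (subst Min_gr_iff) auto
qed

lemma pih_min_le: "x \<in> X \<Longrightarrow> k \<in> {1..p} \<Longrightarrow> pih_min \<le> pmf (pih k) x"
  unfolding pih_min_def by (rule Min_le) (use finite_X in auto)

lemma gate_bounds: "is_gate p X g \<Longrightarrow> 0 \<le> g x k \<and> g x k \<le> 1"
  unfolding is_gate_def by (cases "x \<in> X \<and> k \<in> {1..p}") auto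

lemma pih_min_le_pi_g:
  assumes "is_gate p X g" "x \<in> X"
  shows "pih_min \<le> pi_g p pih g x"
proof -
  have "pih_min = (\<Sum>k=1..p. g x k * pih_min)"
    using assms by (simp add: is_gate_def sum_distrib_right[symmetric])
  also have "\<dots> \<le> pi_g p pih g x"
    unfolding pi_g_def using assms gate_bounds pih_min_le by (intro sum_mono mult_left_mono) auto
  finally show ?thesis .
qed

lemma pi_g_pos: "is_gate p X g \<Longrightarrow> x \<in> X \<Longrightarrow> 0 < pi_g p pih g x"
  using pih_min_le_pi_g pih_min_pos by (meson less_le_trans)

lemma sum_pi_g: "g \<in> gates \<Longrightarrow> (\<Sum>x\<in>X. pi_g p pih g x) = 1"
  by (simp add: G1_def Z_g_def)

definition uniform_gate :: "'a \<Rightarrow> nat \<Rightarrow> real" where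
  "uniform_gate = (\<lambda>x k. if x \<in> X \<and> k \<in> {1..p} then 1 / real p else 0)"

lemma uniform_gate_in_gates: "uniform_gate \<in> gates"
proof -
  have "is_gate p X uniform_gate" using two_le_p by (auto simp: is_gate_def uniform_gate_def)
  moreover have "Z_g p ph pih uniform_gate = (\<Sum>k=1..p. (\<Sum>x\<in>X. pmf (pih k) x) / real p)"
    by (simp add: Z_g_def pi_g_def uniform_gate_def sum.swap[of _ X] sum_divide_distrib)
  ultimately show ?thesis
    using two_le_p by (simp add: G1_def sum_pmf_pih)
qed

lemma pi_g_convex_combination:
  "pi_g p pih (\<lambda>x k. (1 - s) * g x k + s * h x k) x = (1 - s) * pi_g p pih g x + s * pi_g p pih h x"
  unfolding pi_g_def sum_distrib_left sum.distrib[symmetric] by (rule sum.cong) (auto simp: algebra_simps)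

lemma gates_convex:
  assumes "g \<in> gates" "h \<in> gates" "0 \<le> s" "s \<le> 1"
  shows "(\<lambda>x k. (1 - s) * g x k + s * h x k) \<in> gates"
proof -
  have gate: "is_gate p X g" "is_gate p X h" using assms(1,2) by (auto simp: G1_def)
  have "0 \<le> (1 - s) * g x k + s * h x k" for x k
    using assms(3,4) gate_bounds[OF gate(1)] gate_bounds[OF gate(2)] by simp
  moreover have "(1 - s) * g x k + s * h x k \<le> (1 - s) * 1 + s * 1" for x k
    using assms(3,4) gate_bounds[OF gate(1)] gate_bounds[OF gate(2)]
    by (intro add_mono mult_left_mono) auto
  moreover have "(\<Sum>k=1..p. (1 - s) * g x k + s * h x k) = 1" if "x \<in> X" for x
    using gate that by (simp add: is_gate_def sum.distrib sum_distrib_left[symmetric])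
  moreover have "Z_g p ph pih (\<lambda>x k. (1 - s) * g x k + s * h x k) = 1"
    using assms(1,2) by (simp add: Z_g_def pi_g_convex_combination sum.distrib
        sum_distrib_left[symmetric] sum_pi_g)
  ultimately show ?thesis
    using gate by (simp add: G1_def is_gate_def)
qed

lemma gates_closed: "closed gates"
  unfolding G1_def is_gate_def Z_g_def pi_g_def Ball_def
  by (intro closed_Collect_conj closed_Collect_all closed_Collect_imp open_Collect_const
      closed_Collect_le closed_Collect_eq continuous_on_sum continuous_on_mult continuous_on_const
      continuous_on_apply2)

lemma gates_compact: "compact gates"
proof -
  have "gates = {g. \<forall>x k. g x k \<in> {0..1}} \<inter> gates"
    using gate_bounds by (auto simp: G1_def)
  then show ?thesis using compact_Int_closed[OF compact_unit_box gates_closed] by simp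
qed

sublocale gates: projection_domain p X gates
proof
  show "gates \<noteq> {}" using uniform_gate_in_gates by blast
  show "g \<in> gates \<Longrightarrow> x \<notin> X \<or> k \<notin> {1..p} \<Longrightarrow> g x k = 0" for g x k
    by (simp add: G1_def is_gate_def)
qed (auto intro: finite_X gates_compact gates_convex)

lemma sqdist_gates_le:
  assumes "g \<in> gates" "h \<in> gates"
  shows "sqdist p X g h \<le> real (card X) * real p"
proof -
  have "sqdist p X g h \<le> (\<Sum>x\<in>X. \<Sum>k=1..p. 1)"
    unfolding sqdist_def
  proof (intro sum_mono)
    fix x k
    have "\<bar>g x k - h x k\<bar> \<le> 1"
      using assms gate_bounds[of g x k] gate_bounds[of h x k] by (auto simp: G1_def)
    then show "(g x k - h x k)\<^sup>2 \<le> 1"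
      using power_le_one[OF abs_ge_zero, of "g x k - h x k" 2] by simp
  qed
  then show ?thesis by simp
qed

lemma D_KL_nonneg:
  assumes "g \<in> gates" "k \<in> {1..p}"
  shows "0 \<le> D_KL (ph k) (pi_g p pih g)"
proof -
  have "0 = (\<Sum>x\<in>X. pmf (ph k) x) - (\<Sum>x\<in>X. pi_g p pih g x)"
    using sum_pmf_ph[OF assms(2)] sum_pi_g[OF assms(1)] by simp
  also have "\<dots> \<le> D_KL (ph k) (pi_g p pih g)"
    unfolding D_KL_eq_sum_X[OF assms(2)] using assms(1) pi_g_pos
    by (intro gibbs_inequality) (auto simp: G1_def)
  finally show ?thesis .
qed

lemma D_KL_le:
  assumes "is_gate p X g" "k \<in> {1..p}"
  shows "D_KL (ph k) (pi_g p pih g) \<le> - ln pih_min"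
proof -
  have "pmf (ph k) x * ln (pmf (ph k) x / pi_g p pih g x) \<le> pmf (ph k) x * - ln pih_min"
    if "x \<in> X" for x
  proof (cases "pmf (ph k) x = 0")
    case False
    then have "0 < pmf (ph k) x" using pmf_nonneg[of "ph k" x] by linarith
    moreover have "pmf (ph k) x * pih_min \<le> 1 * pi_g p pih g x"
      using pih_min_le_pi_g[OF assms(1) that] pih_min_pos pmf_le_1 by (intro mult_mono) auto
    ultimately have "ln (pmf (ph k) x / pi_g p pih g x) \<le> ln (1 / pih_min)"
      using pi_g_pos[OF assms(1) that] pih_min_pos by (simp add: field_simps)
    then have "pmf (ph k) x * ln (pmf (ph k) x / pi_g p pih g x) \<le> pmf (ph k) x * ln (1 / pih_min)"
      using \<open>0 < pmf (ph k) x\<close> by (intro mult_left_mono) auto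
    then show ?thesis using pih_min_pos by (simp add: ln_div)
  qed simp
  then have "D_KL (ph k) (pi_g p pih g) \<le> (\<Sum>x\<in>X. pmf (ph k) x * - ln pih_min)"
    unfolding D_KL_eq_sum_X[OF assms(2)] by (intro sum_mono)
  also have "\<dots> = - ln pih_min"
    using sum_pmf_ph[OF assms(2)] by (simp add: sum_negf sum_distrib_right[symmetric])
  finally show ?thesis .
qed

lemma abs_grad_g_le:
  assumes "l \<in> prob_simplex p" "is_gate p X g"
  shows "\<bar>grad_g p ph pih l g x k\<bar> \<le> 1 / pih_min"
proof (cases "x \<in> X \<and> k \<in> {1..p}")
  case True
  have "p_mix p ph l x \<le> 1"
    unfolding p_mix_def using assms(1) by (rule simplex_weighted_sum_le) (rule pmf_le_1)
  moreover have "0 \<le> p_mix p ph l x"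
    unfolding p_mix_def using assms(1) by (intro sum_nonneg) (simp add: prob_simplex_def)
  ultimately have mix: "0 \<le> p_mix p ph l x" "p_mix p ph l x \<le> 1" by auto
  have q: "pih_min \<le> pi_g p pih g x" "0 < pi_g p pih g x"
    using pih_min_le_pi_g pi_g_pos assms(2) True by auto
  have "\<bar>grad_g p ph pih l g x k\<bar> = p_mix p ph l x / pi_g p pih g x * pmf (pih k) x"
    using True mix q by (simp add: grad_g_def abs_mult)
  also have "\<dots> \<le> 1 / pi_g p pih g x * 1"
    using mix q pmf_le_1 by (intro mult_mono divide_right_mono) auto
  also have "\<dots> \<le> 1 / pih_min"
    using q pih_min_pos by (simp add: frac_le)
  finally show ?thesis .
qed (use pih_min_pos in \<open>auto simp: grad_g_def\<close>)

lemma enorm_grad_g_le: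
  assumes "l \<in> prob_simplex p" "is_gate p X g"
  shows "enorm p X (grad_g p ph pih l g) \<le> sqrt (real (card X) * real p / pih_min\<^sup>2)"
proof -
  have "(\<Sum>x\<in>X. \<Sum>k=1..p. (grad_g p ph pih l g x k)\<^sup>2)
      \<le> (\<Sum>x\<in>X. \<Sum>k=1..p. (1 / pih_min)\<^sup>2)"
    using abs_grad_g_le[OF assms] pih_min_pos
    by (intro sum_mono) (simp add: abs_le_square_iff[symmetric])
  then show ?thesis
    unfolding enorm_def by (simp add: power_divide)
qed

lemma D_KL_le_supKL:
  assumes "g \<in> gates" "k \<in> {1..p}"
  shows "D_KL (ph k) (pi_g p pih g) \<le> supKL p ph pih"
proof -
  have "bdd_above ((\<lambda>gk. D_KL (ph (snd gk)) (pi_g p pih (fst gk))) ` (gates \<times> {1..p}))"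
    by (rule bdd_aboveI2[where M = "- ln pih_min"]) (auto intro: D_KL_le simp: G1_def)
  then show ?thesis
    unfolding supKL_def using cSUP_upper[of "(g, k)" "gates \<times> {1..p}"
        "\<lambda>gk. D_KL (ph (snd gk)) (pi_g p pih (fst gk))"] assms by auto
qed

lemma supKL_nonneg: "0 \<le> supKL p ph pih"
  using D_KL_nonneg[OF uniform_gate_in_gates, of 1] D_KL_le_supKL[OF uniform_gate_in_gates, of 1]
    two_le_p by simp

lemma enorm_grad_g_le_supGrad:
  assumes "g \<in> gates" "l \<in> prob_simplex p"
  shows "enorm p X (grad_g p ph pih l g) \<le> supGrad p ph pih"
proof -
  have "bdd_above ((\<lambda>gl. enorm p X (grad_g p ph pih (snd gl) (fst gl))) ` (gates \<times> prob_simplex p))"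
    by (rule bdd_aboveI2[where M = "sqrt (real (card X) * real p / pih_min\<^sup>2)"])
      (auto intro: enorm_grad_g_le simp: G1_def)
  then show ?thesis
    unfolding supGrad_def using cSUP_upper[of "(g, l)" "gates \<times> prob_simplex p"
        "\<lambda>gl. enorm p X (grad_g p ph pih (snd gl) (fst gl))"] assms by auto
qed

lemma Ltil_le_supKL:
  "l \<in> prob_simplex p \<Longrightarrow> g \<in> gates \<Longrightarrow> Ltil p ph pih l g \<le> supKL p ph pih"
  unfolding Ltil_def by (intro simplex_weighted_sum_le D_KL_le_supKL)

lemma Ltil_nonneg: "l \<in> prob_simplex p \<Longrightarrow> g \<in> gates \<Longrightarrow> 0 \<le> Ltil p ph pih l g"
  unfolding Ltil_def using D_KL_nonneg by (intro sum_nonneg mult_nonneg_nonneg) (auto simp: prob_simplex_def)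

lemma Ltil_le_SUP:
  assumes "l \<in> prob_simplex p" "g \<in> gates"
  shows "Ltil p ph pih l g \<le> (SUP l\<in>prob_simplex p. Ltil p ph pih l g)"
proof -
  have "bdd_above ((\<lambda>l. Ltil p ph pih l g) ` prob_simplex p)"
    using assms(2) Ltil_le_supKL by (intro bdd_aboveI2) auto
  then show ?thesis using assms(1) by (rule cSUP_upper[rotated])
qed

lemma Ltil_gradient_inequality:
  assumes l: "\<And>k. k \<in> {1..p} \<Longrightarrow> 0 \<le> l k"
    and g: "\<And>x. x \<in> X \<Longrightarrow> 0 < pi_g p pih g x"
    and h: "\<And>x. x \<in> X \<Longrightarrow> 0 < pi_g p pih h x"
  shows "Ltil p ph pih l g + inner_on p X (grad_g p ph pih l g) (\<lambda>x k. h x k - g x k)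
    \<le> Ltil p ph pih l h"
proof -
  let ?qg = "pi_g p pih g" and ?qh = "pi_g p pih h"
  have "inner_on p X (grad_g p ph pih l g) (\<lambda>x k. h x k - g x k)
      = (\<Sum>x\<in>X. - (p_mix p ph l x / ?qg x) * (\<Sum>k=1..p. pmf (pih k) x * (h x k - g x k)))"
    unfolding inner_on_def grad_g_def by (intro sum.cong refl) (auto simp: sum_distrib_left mult.assoc)
  also have "\<dots> = (\<Sum>x\<in>X. - (p_mix p ph l x / ?qg x) * (?qh x - ?qg x))"
    unfolding pi_g_def by (intro sum.cong refl) (simp add: sum_subtractf algebra_simps)
  also have "\<dots> = (\<Sum>x\<in>X. p_mix p ph l x * ((?qg x - ?qh x) / ?qg x))"
    by (intro sum.cong refl) (simp add: diff_divide_distrib right_diff_distrib)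
  also have "\<dots> = (\<Sum>k=1..p. l k * (\<Sum>x\<in>X. pmf (ph k) x * (?qg x - ?qh x) / ?qg x))"
    unfolding p_mix_def
    by (simp add: sum_distrib_left sum_distrib_right sum_divide_distrib sum.swap[of _ X] mult.assoc)
  also have "\<dots> \<le> (\<Sum>k=1..p. l k * (\<Sum>x\<in>X.
      pmf (ph k) x * ln (pmf (ph k) x / ?qh x) - pmf (ph k) x * ln (pmf (ph k) x / ?qg x)))"
    using l g h by (intro sum_mono mult_left_mono mult_ln_div_diff_ge) auto
  also have "\<dots> = Ltil p ph pih l h - Ltil p ph pih l g"
    unfolding Ltil_def by (simp add: D_KL_eq_sum_X sum_subtractf right_diff_distrib)
  finally show ?thesis by simp
qed

lemma Ltil_average_le:
  assumes I: "finite I" "I \<noteq> {}" and g: "\<And>i. i \<in> I \<Longrightarrow> g i \<in> gates"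
    and u: "u \<in> prob_simplex p"
  shows "real (card I) * Ltil p ph pih u (\<lambda>x k. (1 / real (card I)) * (\<Sum>i\<in>I. g i x k))
    \<le> (\<Sum>i\<in>I. Ltil p ph pih u (g i))"
proof -
  define avg where "avg = (\<lambda>x k. (1 / real (card I)) * (\<Sum>i\<in>I. g i x k))"
  have card: "0 < real (card I)" using I by (simp add: card_gt_0_iff)
  have "pi_g p pih avg x = (1 / real (card I)) * (\<Sum>i\<in>I. pi_g p pih (g i) x)" for x
    unfolding avg_def pi_g_def
    by (simp add: sum_distrib_left sum_distrib_right sum.swap[of _ I] mult.assoc)
  moreover have "0 < (\<Sum>i\<in>I. pi_g p pih (g i) x)" if "x \<in> X" for x
    using I g pi_g_pos that by (intro sum_pos) (auto simp: G1_def)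
  ultimately have avg_pos: "0 < pi_g p pih avg x" if "x \<in> X" for x
    using that card by simp
  define v where "v = grad_g p ph pih u avg"
  have "(\<Sum>i\<in>I. Ltil p ph pih u avg + inner_on p X v (\<lambda>x k. g i x k - avg x k))
      \<le> (\<Sum>i\<in>I. Ltil p ph pih u (g i))"
    unfolding v_def using u avg_pos g pi_g_pos
    by (intro sum_mono Ltil_gradient_inequality) (auto simp: prob_simplex_def G1_def)
  moreover have "(\<Sum>i\<in>I. g i x k - avg x k) = 0" for x k
    using card by (simp add: avg_def sum_subtractf)
  then have "(\<Sum>i\<in>I. inner_on p X v (\<lambda>x k. g i x k - avg x k)) = 0"
    unfolding inner_on_sum_right by (simp add: inner_on_def)
  ultimately show ?thesis
    unfolding avg_def[symmetric] by (simp add: sum.distrib)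
qed

context
  fixes eta eps :: real
begin

definition weights :: "nat \<Rightarrow> nat \<Rightarrow> real" where
  "weights t = fst (iter p ph pih eta eps t)"

definition gate_iterate :: "nat \<Rightarrow> 'a \<Rightarrow> nat \<Rightarrow> real" where
  "gate_iterate t = snd (iter p ph pih eta eps t)"

definition losses :: "nat \<Rightarrow> nat \<Rightarrow> real" where
  "losses t k = D_KL (ph k) (pi_g p pih (gate_iterate t))"

lemma gate_iterate_0: "gate_iterate 0 = uniform_gate"
  by (simp add: gate_iterate_def uniform_gate_def)

lemma weights_Suc: "weights (Suc t) = (\<lambda>k. if k \<in> {1..p}
    then weights t k * exp (eta * losses t k) / (\<Sum>j=1..p. weights t j * exp (eta * losses t j))
    else 0)"
  unfolding weights_def gate_iterate_def losses_def by (simp add: Let_def)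

lemma gate_iterate_Suc: "gate_iterate (Suc t) = proj p X gates
    (\<lambda>x k. gate_iterate t x k - eps * grad_g p ph pih (weights (Suc t)) (gate_iterate t) x k)"
  unfolding weights_def gate_iterate_def losses_def by (simp add: Let_def grad_g_def)

lemma weights_exponential_weights: "exponential_weights {1..p} eta weights losses"
proof
  show "{1..p} \<noteq> {}" using two_le_p by simp
  show "weights 0 k = 1 / real (card {1..p})" if "k \<in> {1..p}" for k
    using that by (simp add: weights_def)
  show "weights (Suc t) k
      = weights t k * exp (eta * losses t k) / (\<Sum>j\<in>{1..p}. weights t j * exp (eta * losses t j))"
    if "k \<in> {1..p}" for k t
    using that by (simp add: weights_Suc)
qed simp

lemma weights_in_simplex: "weights t \<in> prob_simplex p"
proof -
  have "weights t k = 0" if "k \<notin> {1..p}" for k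
    using that by (cases t) (auto simp: weights_def Let_def)
  then show ?thesis
    using exponential_weights.w_pos[OF weights_exponential_weights]
      exponential_weights.sum_w[OF weights_exponential_weights]
    by (auto simp: prob_simplex_def less_imp_le)
qed

lemma gate_iterate_in_gates: "gate_iterate t \<in> gates"
  by (induction t) (simp_all add: gate_iterate_0 uniform_gate_in_gates gate_iterate_Suc gates.proj_in)

lemma weights_regret:
  assumes "u \<in> prob_simplex p"
  shows "eta * (\<Sum>t<T. Ltil p ph pih u (gate_iterate t))
    \<le> ln (real p) + eta * (\<Sum>t<T. Ltil p ph pih (weights (Suc t)) (gate_iterate t))"
  using exponential_weights.regret_bound[OF weights_exponential_weights, of u T] assms
  by (simp add: prob_simplex_def Ltil_def losses_def)

lemma gate_regret:
  assumes "0 < eps" "g \<in> gates"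
  shows "(\<Sum>t<T. Ltil p ph pih (weights (Suc t)) (gate_iterate t))
    \<le> (\<Sum>t<T. Ltil p ph pih (weights (Suc t)) g)
      + real (card X) * real p / (2 * eps) + real T * eps * (supGrad p ph pih)\<^sup>2 / 2"
proof -
  define v where "v t = grad_g p ph pih (weights (Suc t)) (gate_iterate t)" for t
  have "Ltil p ph pih (weights (Suc t)) (gate_iterate t)
      \<le> Ltil p ph pih (weights (Suc t)) g
        + inner_on p X (v t) (\<lambda>x k. gate_iterate t x k - g x k)" for t
    using Ltil_gradient_inequality[of "weights (Suc t)" "gate_iterate t" g]
      weights_in_simplex gate_iterate_in_gates assms(2) pi_g_pos
    by (auto simp: v_def prob_simplex_def G1_def inner_on_diff_swap[of _ _ _ g])
  then have "(\<Sum>t<T. Ltil p ph pih (weights (Suc t)) (gate_iterate t))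
      \<le> (\<Sum>t<T. Ltil p ph pih (weights (Suc t)) g)
        + (\<Sum>t<T. inner_on p X (v t) (\<lambda>x k. gate_iterate t x k - g x k))"
    by (simp add: sum.distrib[symmetric] sum_mono)
  also have "(\<Sum>t<T. inner_on p X (v t) (\<lambda>x k. gate_iterate t x k - g x k))
      \<le> sqdist p X (gate_iterate 0) g / (2 * eps) + real T * eps * (supGrad p ph pih)\<^sup>2 / 2"
    using assms weights_in_simplex gate_iterate_in_gates
    by (intro gates.projected_gradient_regret)
      (auto simp: v_def gate_iterate_Suc intro: enorm_grad_g_le_supGrad)
  also have "sqdist p X (gate_iterate 0) g \<le> real (card X) * real p"
    using gate_iterate_in_gates assms(2) by (intro sqdist_gates_le)
  finally show ?thesis
    using assms(1) by (simp add: divide_right_mono)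
qed

lemma Ltil_gbar_le:
  assumes eta: "0 < eta" and eps: "0 < eps" and T: "1 \<le> T"
    and u: "u \<in> prob_simplex p" and g: "g \<in> gates"
  shows "real T * Ltil p ph pih u (gbar p ph pih eta eps T)
    \<le> ln (real p) / eta + real T * (SUP l\<in>prob_simplex p. Ltil p ph pih l g)
      + real (card X) * real p / (2 * eps) + real T * eps * (supGrad p ph pih)\<^sup>2 / 2
      + supKL p ph pih"
proof -
  define F where "F t = Ltil p ph pih u (gate_iterate t)" for t
  (* gbar averages the iterates 1..T, the regret bounds concern 0..T-1; the shift costs supKL. *)
  have "gbar p ph pih eta eps T
      = (\<lambda>x k. (1 / real (card {1..T})) * (\<Sum>t\<in>{1..T}. gate_iterate t x k))"
    by (simp add: gbar_def gate_iterate_def)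
  then have "real T * Ltil p ph pih u (gbar p ph pih eta eps T) \<le> (\<Sum>t=1..T. F t)"
    using Ltil_average_le[of "{1..T}" gate_iterate u] T gate_iterate_in_gates u by (simp add: F_def)
  also have "\<dots> = (\<Sum>t<T. F t) + (F T - F 0)"
    using sum_lessThan_telescope[of F T] by (simp add: sum.atLeast1_atMost_eq sum_subtractf)
  also have "\<dots> \<le> (\<Sum>t<T. F t) + supKL p ph pih"
    using Ltil_le_supKL[OF u gate_iterate_in_gates, of T] Ltil_nonneg[OF u gate_iterate_in_gates, of 0]
    by (simp add: F_def)
  also have "(\<Sum>t<T. F t)
      \<le> ln (real p) / eta + (\<Sum>t<T. Ltil p ph pih (weights (Suc t)) (gate_iterate t))"
    using weights_regret[OF u, of T] eta by (simp add: F_def field_simps)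
  also have "(\<Sum>t<T. Ltil p ph pih (weights (Suc t)) (gate_iterate t))
      \<le> (\<Sum>t<T. Ltil p ph pih (weights (Suc t)) g)
        + real (card X) * real p / (2 * eps) + real T * eps * (supGrad p ph pih)\<^sup>2 / 2"
    by (rule gate_regret[OF eps g])
  also have "(\<Sum>t<T. Ltil p ph pih (weights (Suc t)) g)
      \<le> real T * (SUP l\<in>prob_simplex p. Ltil p ph pih l g)"
    using sum_mono[of "{..<T}", OF Ltil_le_SUP[OF weights_in_simplex g]] by simp
  finally show ?thesis by simp
qed

end

definition gap_constant :: real where
  "gap_constant = ln (real p) + real (card X) * real p / 2 + (supGrad p ph pih)\<^sup>2 / 2 + supKL p ph pih"

theorem gbar_saddle_gap_le:
  assumes T: "1 \<le> T"
  defines "r \<equiv> sqrt (real T)"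
  shows "(SUP l\<in>prob_simplex p. Ltil p ph pih l (gbar p ph pih (1 / r) (1 / r) T)) - Vtil p ph pih
    \<le> gap_constant / r"
proof -
  let ?K = gap_constant
  have r: "1 \<le> r" "real T = r\<^sup>2" using T by (simp_all add: r_def)
  have "Ltil p ph pih u (gbar p ph pih (1 / r) (1 / r) T)
      \<le> (SUP l\<in>prob_simplex p. Ltil p ph pih l g) + ?K / r"
    if u: "u \<in> prob_simplex p" and g: "g \<in> gates" for u g
  proof -
    have "r\<^sup>2 * Ltil p ph pih u (gbar p ph pih (1 / r) (1 / r) T)
        \<le> r\<^sup>2 * (SUP l\<in>prob_simplex p. Ltil p ph pih l g)
          + r * (ln (real p) + real (card X) * real p / 2 + (supGrad p ph pih)\<^sup>2 / 2) + supKL p ph pih"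
      using Ltil_gbar_le[OF _ _ T u g, of "1 / r" "1 / r"] r by (simp add: power2_eq_square field_simps)
    also have "\<dots> \<le> r\<^sup>2 * ((SUP l\<in>prob_simplex p. Ltil p ph pih l g) + ?K / r)"
      using r supKL_nonneg mult_le_cancel_right1[of "supKL p ph pih" r]
      by (simp add: gap_constant_def power2_eq_square field_simps)
    finally show ?thesis using r by simp
  qed
  then have "(SUP u\<in>prob_simplex p. Ltil p ph pih u (gbar p ph pih (1 / r) (1 / r) T)) - ?K / r
      \<le> (SUP l\<in>prob_simplex p. Ltil p ph pih l g)" if "g \<in> gates" for g
    using that simplex_nonempty two_le_p by (auto simp: diff_le_eq intro!: cSUP_least)
  then have "(SUP u\<in>prob_simplex p. Ltil p ph pih u (gbar p ph pih (1 / r) (1 / r) T)) - ?K / r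
      \<le> Vtil p ph pih"
    unfolding Vtil_def using uniform_gate_in_gates by (intro cINF_greatest) auto
  then show ?thesis by simp
qed

lemma expert_indices_gates: "expert_indices gates = {1..p}"
proof -
  obtain x where "x \<in> X" using X_nonempty by blast
  then have "uniform_gate x k \<noteq> 0" if "k \<in> {1..p}" for k
    using that two_le_p by (simp add: uniform_gate_def)
  then have "{1..p} \<subseteq> expert_indices gates"
    unfolding expert_indices_def using uniform_gate_in_gates by blast
  moreover have "expert_indices gates \<subseteq> {1..p}"
    unfolding expert_indices_def G1_def is_gate_def by blast
  ultimately show ?thesis by blast
qed

lemma gate_domain_gates: "gate_domain gates = X"
proof -
  have "uniform_gate x 1 \<noteq> 0" if "x \<in> X" for x
    using that two_le_p by (simp add: uniform_gate_def)
  then have "X \<subseteq> gate_domain gates"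
    unfolding gate_domain_def using uniform_gate_in_gates by blast
  moreover have "gate_domain gates \<subseteq> X"
    unfolding gate_domain_def G1_def is_gate_def by blast
  ultimately show ?thesis by blast
qed

lemma rate_constant_gates:
  "rate_constant gates (supKL p ph pih) (supGrad p ph pih) = gap_constant / sqrt (ln (real p))"
  by (simp add: rate_constant_def expert_indices_gates gate_domain_gates gap_constant_def Let_def)

lemma rate_constant_pos: "0 < rate_constant gates (supKL p ph pih) (supGrad p ph pih)"
proof -
  have "0 < ln (real p)" using two_le_p by simp
  then show ?thesis
    using supKL_nonneg by (simp add: rate_constant_gates gap_constant_def add_pos_nonneg)
qed

theorem saddle_gap_le_rate:
  assumes "1 \<le> T"
  shows "(SUP l\<in>prob_simplex p.
      Ltil p ph pih l (gbar p ph pih (1 / sqrt (real T)) (1 / sqrt (real T)) T)) - Vtil p ph pih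
    \<le> rate_constant gates (supKL p ph pih) (supGrad p ph pih) * sqrt (ln (real p) / real T)"
proof -
  have "0 < ln (real p)" using two_le_p by simp
  then have "rate_constant gates (supKL p ph pih) (supGrad p ph pih) * sqrt (ln (real p) / real T)
      = gap_constant / sqrt (real T)"
    by (simp add: rate_constant_gates real_sqrt_divide)
  then show ?thesis using gbar_saddle_gap_le[OF assms] by simp
qed

end

theorem mainTheorem12:
  "\<exists>(A :: ('a \<Rightarrow> nat \<Rightarrow> real) set \<Rightarrow> real \<Rightarrow> real \<Rightarrow> real) B Cc.
    \<forall>(p::nat) (ph :: nat \<Rightarrow> 'a pmf) (pih :: nat \<Rightarrow> 'a pmf).
      p \<ge> 2 \<and>
      (\<forall>k\<in>{1..p}. finite (set_pmf (ph k))) \<and>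
      (\<forall>k\<in>{1..p}. set_pmf (pih k) \<subseteq> X0 p ph) \<and>
      (\<forall>k\<in>{1..p}. \<forall>x\<in>X0 p ph. pmf (pih k) x > 0)
      \<longrightarrow>
      (let a = A (G1 p ph pih) (supKL p ph pih) (supGrad p ph pih);
           b = B (G1 p ph pih) (supKL p ph pih) (supGrad p ph pih);
           C = Cc (G1 p ph pih) (supKL p ph pih) (supGrad p ph pih)
       in a > 0 \<and> b > 0 \<and> C > 0 \<and>
          (\<forall>T::nat. T \<ge> 1 \<longrightarrow>
            (SUP l\<in>prob_simplex p.
               Ltil p ph pih l (gbar p ph pih (a / sqrt (real T)) (b / sqrt (real T)) T))
              - Vtil p ph pih
            \<le> C * sqrt (ln (real p) / real T)))"
  by (rule exI[of _ "\<lambda>_ _ _. 1"], rule exI[of _ "\<lambda>_ _ _. 1"], rule exI[of _ rate_constant])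
    (auto simp: Let_def gate_problem_def
      intro: gate_problem.rate_constant_pos gate_problem.saddle_gap_le_rate)

end
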